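(* Let $M_w(\omega_{\max})=\max_{|\xi|\le\omega_{\max}}|\xi|\,w(|\xi|)$ and assume $M_w(\omega_{\max})<\infty$. Then the Hermitian matrix $\hat A$ and the self-adjoint operator $\hat L$ defined in the context satisfy $$\lambda_{\min}(\hat A)\ge\frac1{2M_w(\omega_{\max})},\qquad \lambda_{\min}(\hat L)\ge\frac1{2\pi M_w(\omega_{\max})^2}.$$
   Context: Let $w:[0,\infty)\to(0,\infty]$ be a radial weight and $\langle f,g\rangle_{L^2_w(\mathbb R^3)}=\int f\overline g\,w(|\xi|)d\xi$. Let $\hat h_1,\dots,\hat h_{\hat p}$ be continuous functions on $\mathbb R^3$ supported in the ball $B_{\omega_{\max}}$ of radius $\omega_{\max}$, orthonormal in $L^2_w(\mathbb R^3)$. Let $\mathcal K(\xi_1,\xi_2)=\frac1{2\pi|\xi_1\times\xi_2|}$. Define the $\hat p\times\hat p$ matrix $\hat A_{ij}=\int_{\mathbb R^3}\hat h_j(\xi)\overline{\hat h_i(\xi)}\frac{1}{2|\xi|}d\xi$ and the operator $\hat L$ on $\mathbb C^{\hat p\times\hat p}$ (inner product $\mathrm{tr}(M_2^HM_1)$) by $(\hat L\Sigma)_{i_1i_2}=\sum_{j_1,j_2}\hat L_{i_1i_2,j_1j_2}\Sigma_{j_1j_2}$ with $$\hat L_{i_1i_2,j_1j_2}=\int_{\mathbb R^3\times\mathbb R^3}\hat h_{j_1}(\xi_1)\overline{\hat h_{j_2}(\xi_2)}\,\mathcal K(\xi_1,\xi_2)\,\overline{\hat h_{i_1}(\xi_1)}\hat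 h_{i_2}(\xi_2)\,d\xi_1d\xi_2.$$ (Equivalently, identifying $\mu\in\mathbb C^{\hat p}$ with $m=\sum\mu_i\hat h_i$ and $\Sigma$ with $\sum\Sigma_{ij}\hat h_i(\xi_1)\overline{\hat h_j(\xi_2)}$, $\hat A$ is $m\mapsto\pi(m/(2|\xi|))$ and $\hat L$ is $\mathcal C\mapsto\pi(\mathcal C\mathcal K)$, with $\pi$ the projection $\eta\mapsto\sum\hat h_i\int\eta\overline{\hat h_i}$ and its tensor analogue.) These are the large-sample limits $\mathbb E[\hat{\mathbf P}^H\hat{\mathbf P}]$, $\mathbb E[\hat{\mathbf P}^H\hat{\mathbf P}\,\cdot\,\hat{\mathbf P}^H\hat{\mathbf P}]$ for projections at uniformly random rotations. *)

theory Defs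
  imports "HOL-Analysis.Analysis"
begin

definition mat_eigenvalue :: "nat \<Rightarrow> (nat \<Rightarrow> nat \<Rightarrow> complex) \<Rightarrow> complex \<Rightarrow> bool" where
  "mat_eigenvalue p A lam \<longleftrightarrow>
     (\<exists>v :: nat \<Rightarrow> complex. (\<exists>i<p. v i \<noteq> 0) \<and>
        (\<forall>i<p. (\<Sum>j<p. A i j * v j) = lam * v i))"

definition op_eigenvalue :: "nat \<Rightarrow> (nat \<Rightarrow> nat \<Rightarrow> nat \<Rightarrow> nat \<Rightarrow> complex) \<Rightarrow> complex \<Rightarrow> bool" where
  "op_eigenvalue p L lam \<longleftrightarrow>
     (\<exists>S :: nat \<Rightarrow> nat \<Rightarrow> complex. (\<exists>i1<p. \<exists>i2<p. S i1 i2 \<noteq> 0) \<and>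
        (\<forall>i1<p. \<forall>i2<p. (\<Sum>j1<p. \<Sum>j2<p. L i1 i2 j1 j2 * S j1 j2) = lam * S i1 i2))"

definition inner_w :: "(real \<Rightarrow> ennreal) \<Rightarrow> (real^3 \<Rightarrow> complex) \<Rightarrow> (real^3 \<Rightarrow> complex) \<Rightarrow> complex" where
  "inner_w w f g = integral\<^sup>L lborel (\<lambda>\<xi>. f \<xi> * cnj (g \<xi>) * complex_of_real (enn2real (w (norm \<xi>))))"

definition M_w :: "(real \<Rightarrow> ennreal) \<Rightarrow> real \<Rightarrow> ennreal" where
  "M_w w \<omega> = (SUP \<xi>\<in>cball (0::real^3) \<omega>. ennreal (norm \<xi>) * w (norm \<xi>))"

definition kernelK :: "real^3 \<Rightarrow> real^3 \<Rightarrow> real" where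
  "kernelK \<xi>1 \<xi>2 = 1 / (2 * pi * norm (cross3 \<xi>1 \<xi>2))"

definition hatA :: "(nat \<Rightarrow> real^3 \<Rightarrow> complex) \<Rightarrow> nat \<Rightarrow> nat \<Rightarrow> complex" where
  "hatA h i j = integral\<^sup>L lborel (\<lambda>\<xi>. h j \<xi> * cnj (h i \<xi>) * complex_of_real (1 / (2 * norm \<xi>)))"

definition hatL :: "(nat \<Rightarrow> real^3 \<Rightarrow> complex) \<Rightarrow> nat \<Rightarrow> nat \<Rightarrow> nat \<Rightarrow> nat \<Rightarrow> complex" where
  "hatL h i1 i2 j1 j2 = integral\<^sup>L (lborel \<Otimes>\<^sub>M lborel)
     (\<lambda>(\<xi>1, \<xi>2). h j1 \<xi>1 * cnj (h j2 \<xi>2) * complex_of_real (kernelK \<xi>1 \<xi>2)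
                  * cnj (h i1 \<xi>1) * h i2 \<xi>2)"

end

theory Submission
  imports Defs
begin

text \<open>Both matrices are Gram matrices \<open>G\<^sub>i\<^sub>j = \<integral> g\<^sub>j conj(g\<^sub>i) K\<close> of a family \<open>g\<close> that is
  orthonormal for a weight \<open>W\<close>: for \<open>hatA\<close> the \<open>h\<^sub>i\<close> themselves with \<open>K = 1/(2|\<xi>|)\<close>, for \<open>hatL\<close>
  the tensor products \<open>h\<^sub>j\<^sub>1(\<xi>\<^sub>1) conj(h\<^sub>j\<^sub>2(\<xi>\<^sub>2))\<close> with the kernel \<open>kernelK\<close> and the weight
  \<open>w(|\<xi>\<^sub>1|) w(|\<xi>\<^sub>2|)\<close>. For an eigenvector \<open>v\<close> and \<open>m = \<Sum> v\<^sub>j g\<^sub>j\<close> the Rayleigh quotient gives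
  \<open>\<lambda> |v|\<^sup>2 = \<integral> |m|\<^sup>2 K\<close> while orthonormality gives \<open>|v|\<^sup>2 = \<integral> |m|\<^sup>2 W\<close>; so \<open>\<lambda>\<close> is real and
  \<open>\<lambda> \<ge> c\<close> whenever \<open>c W \<le> K\<close> on the common support. On the ball \<open>|\<xi>| w(|\<xi>|) \<le> M\<close>, which gives
  \<open>c = 1/(2M)\<close>, and together with \<open>|\<xi>\<^sub>1 \<times> \<xi>\<^sub>2| \<le> |\<xi>\<^sub>1| |\<xi>\<^sub>2|\<close> it gives \<open>c = 1/(2\<pi>M\<^sup>2)\<close>.

  What remains is integrability of \<open>1/|\<xi>|\<close> and \<open>1/|\<xi>\<^sub>1 \<times> \<xi>\<^sub>2|\<close> over balls. The bounds
  \<open>|\<xi>| \<ge> (|\<xi>\<^sub>1| |\<xi>\<^sub>2| |\<xi>\<^sub>3|)\<^sup>1\<^sup>/\<^sup>3\<close> and, after rotating \<open>\<xi>\<^sub>1\<close> onto the third axis,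
  \<open>|e\<^sub>3 \<times> \<eta>| \<ge> (|\<eta>\<^sub>1| |\<eta>\<^sub>2|)\<^sup>1\<^sup>/\<^sup>2\<close> split both into products of one-dimensional integrals
  \<open>\<integral>\<^sub>-\<^sub>R\<^sup>R |t|\<^sup>-\<^sup>a dt < \<infinity>\<close> with \<open>a < 1\<close>.\<close>

section \<open>Rayleigh quotients of Gram matrices\<close>

lemma quadratic_form_of_gram:
  fixes g :: "'i \<Rightarrow> 'a \<Rightarrow> complex" and K :: "'a \<Rightarrow> real" and v :: "'i \<Rightarrow> complex"
  assumes "finite I"
    and int: "\<And>i j. i \<in> I \<Longrightarrow> j \<in> I \<Longrightarrow> integrable M (\<lambda>x. g j x * cnj (g i x) * of_real (K x))"
  shows "integrable M (\<lambda>x. (cmod (\<Sum>j\<in>I. v j * g j x))\<^sup>2 * K x)"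
    and "(\<Sum>i\<in>I. \<Sum>j\<in>I. cnj (v i) * v j * (LINT x|M. g j x * cnj (g i x) * of_real (K x)))
         = of_real (LINT x|M. (cmod (\<Sum>j\<in>I. v j * g j x))\<^sup>2 * K x)"
proof -
  have pointwise: "(\<Sum>i\<in>I. \<Sum>j\<in>I. cnj (v i) * v j * (g j x * cnj (g i x) * of_real (K x)))
      = of_real ((cmod (\<Sum>j\<in>I. v j * g j x))\<^sup>2 * K x)" for x
  proof -
    have "of_real ((cmod (\<Sum>j\<in>I. v j * g j x))\<^sup>2 * K x)
        = (\<Sum>j\<in>I. v j * g j x) * (\<Sum>i\<in>I. cnj (v i) * cnj (g i x)) * of_real (K x)"
      unfolding of_real_mult complex_norm_square cnj_sum complex_cnj_mult by (rule refl)
    show ?thesis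
      unfolding \<open>?this\<close> sum_product sum_distrib_right by (subst sum.swap) (simp add: sum_distrib_left mult_ac)
  qed
  have "integrable M (\<lambda>x. \<Sum>i\<in>I. \<Sum>j\<in>I. cnj (v i) * v j * (g j x * cnj (g i x) * of_real (K x)))"
    using int by (intro Bochner_Integration.integrable_sum integrable_mult_right) auto
  then show "integrable M (\<lambda>x. (cmod (\<Sum>j\<in>I. v j * g j x))\<^sup>2 * K x)"
    by (simp only: pointwise complex_of_real_integrable_eq)
  have "(\<Sum>i\<in>I. \<Sum>j\<in>I. cnj (v i) * v j * (LINT x|M. g j x * cnj (g i x) * of_real (K x)))
      = (LINT x|M. (\<Sum>i\<in>I. \<Sum>j\<in>I. cnj (v i) * v j * (g j x * cnj (g i x) * of_real (K x))))"
    using int by (simp add: Bochner_Integration.integral_sum Bochner_Integration.integrable_sum)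
  also have "\<dots> = of_real (LINT x|M. (cmod (\<Sum>j\<in>I. v j * g j x))\<^sup>2 * K x)"
    by (simp only: pointwise integral_complex_of_real)
  finally show "(\<Sum>i\<in>I. \<Sum>j\<in>I. cnj (v i) * v j * (LINT x|M. g j x * cnj (g i x) * of_real (K x)))
         = of_real (LINT x|M. (cmod (\<Sum>j\<in>I. v j * g j x))\<^sup>2 * K x)" .
qed

lemma gram_eigenvalue_ge:
  fixes g :: "'i \<Rightarrow> 'a \<Rightarrow> complex" and K W :: "'a \<Rightarrow> real" and v :: "'i \<Rightarrow> complex"
  assumes I: "finite I"
    and K_int: "\<And>i j. i \<in> I \<Longrightarrow> j \<in> I \<Longrightarrow> integrable M (\<lambda>x. g j x * cnj (g i x) * of_real (K x))"
    and W_int: "\<And>i j. i \<in> I \<Longrightarrow> j \<in> I \<Longrightarrow> integrable M (\<lambda>x. g j x * cnj (g i x) * of_real (W x))"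
    and orthonormal: "\<And>i j. i \<in> I \<Longrightarrow> j \<in> I \<Longrightarrow>
      (LINT x|M. g j x * cnj (g i x) * of_real (W x)) = (if i = j then 1 else 0)"
    and dominated: "AE x in M. (\<forall>i\<in>I. g i x = 0) \<or> c * W x \<le> K x"
    and nonzero: "k \<in> I" "v k \<noteq> 0"
    and eigen: "\<And>i. i \<in> I \<Longrightarrow>
      (\<Sum>j\<in>I. (LINT x|M. g j x * cnj (g i x) * of_real (K x)) * v j) = lam * v i"
  shows "Im lam = 0 \<and> c \<le> Re lam"
proof -
  define m where "m x = (\<Sum>j\<in>I. v j * g j x)" for x
  define n where "n = (\<Sum>i\<in>I. (cmod (v i))\<^sup>2)"
  have n_pos: "n > 0"
    unfolding n_def using I nonzero by (intro sum_pos2[of _ k]) auto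
  have "of_real (LINT x|M. (cmod (m x))\<^sup>2 * K x)
      = (\<Sum>i\<in>I. \<Sum>j\<in>I. cnj (v i) * v j * (LINT x|M. g j x * cnj (g i x) * of_real (K x)))"
    unfolding m_def by (rule quadratic_form_of_gram(2)[OF I K_int, symmetric])
  also have "\<dots> = (\<Sum>i\<in>I. cnj (v i) * (\<Sum>j\<in>I. (LINT x|M. g j x * cnj (g i x) * of_real (K x)) * v j))"
    by (simp add: sum_distrib_left mult_ac)
  also have "\<dots> = (\<Sum>i\<in>I. cnj (v i) * (lam * v i))"
    by (simp add: eigen)
  also have "\<dots> = lam * of_real n"
    unfolding n_def of_real_sum complex_norm_square sum_distrib_left by (simp add: mult_ac)
  finally have lam_eq: "lam = of_real ((LINT x|M. (cmod (m x))\<^sup>2 * K x) / n)"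
    using n_pos by (simp add: field_simps)
  have "of_real (LINT x|M. (cmod (m x))\<^sup>2 * W x)
      = (\<Sum>i\<in>I. \<Sum>j\<in>I. cnj (v i) * v j * (LINT x|M. g j x * cnj (g i x) * of_real (W x)))"
    unfolding m_def by (rule quadratic_form_of_gram(2)[OF I W_int, symmetric])
  also have "\<dots> = (\<Sum>i\<in>I. \<Sum>j\<in>I. cnj (v i) * v j * (if i = j then 1 else 0))"
    by (intro sum.cong refl) (simp add: orthonormal)
  also have "\<dots> = (\<Sum>i\<in>I. v i * cnj (v i))"
    using I by (simp add: mult.commute if_distrib sum.delta cong: if_cong)
  also have "\<dots> = of_real n"
    unfolding n_def of_real_sum complex_norm_square by (rule refl)
  finally have W_form: "(LINT x|M. (cmod (m x))\<^sup>2 * W x) = n"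
    by (simp only: of_real_eq_iff)
  have "c * n \<le> (LINT x|M. (cmod (m x))\<^sup>2 * K x)"
  proof -
    have "c * n = (LINT x|M. c * ((cmod (m x))\<^sup>2 * W x))"
      by (simp add: W_form)
    also have "\<dots> \<le> (LINT x|M. (cmod (m x))\<^sup>2 * K x)"
    proof (rule integral_mono_AE)
      show "integrable M (\<lambda>x. c * ((cmod (m x))\<^sup>2 * W x))"
        unfolding m_def by (intro integrable_mult_right quadratic_form_of_gram(1)[OF I W_int])
      show "integrable M (\<lambda>x. (cmod (m x))\<^sup>2 * K x)"
        unfolding m_def by (rule quadratic_form_of_gram(1)[OF I K_int])
      show "AE x in M. c * ((cmod (m x))\<^sup>2 * W x) \<le> (cmod (m x))\<^sup>2 * K x"
        using dominated
      proof eventually_elim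
        case (elim x)
        then show ?case
        proof
          assume "c * W x \<le> K x"
          from mult_left_mono[OF this, of "(cmod (m x))\<^sup>2"] show ?thesis
            by (simp add: mult.left_commute)
        qed (simp add: m_def)
      qed
    qed
    finally show ?thesis .
  qed
  then show ?thesis
    unfolding lam_eq using n_pos by (simp add: pos_le_divide_eq)
qed

section \<open>Integrable singularities in \<open>\<real>\<^sup>3\<close>\<close>

lemma ennreal_inverse_antimono:
  fixes a b :: ennreal
  assumes "a \<le> b"
  shows "inverse b \<le> inverse a"
proof (cases "a = 0")
  case False
  with assms show ?thesis
    by (cases a; cases b) (auto simp: inverse_ennreal le_imp_inverse_le top_unique)
qed simp

lemma nn_integral_lborel_prod_3:
  fixes g1 g2 g3 :: "real \<Rightarrow> ennreal"
  assumes [measurable]: "g1 \<in> borel_measurable borel" "g2 \<in> borel_measurable borel"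
    "g3 \<in> borel_measurable borel"
  shows "(\<integral>\<^sup>+x. g1 (x$1) * g2 (x$2) * g3 (x$3) \<partial>(lborel :: (real^3) measure))
      = (\<integral>\<^sup>+t. g1 t \<partial>lborel) * (\<integral>\<^sup>+t. g2 t \<partial>lborel) * (\<integral>\<^sup>+t. g3 t \<partial>lborel)"
proof -
  have basis: "(Basis :: (real^3) set) = {axis 1 1, axis 2 1, axis 3 1}"
  proof -
    have "(Basis :: (real^3) set) = (\<lambda>i. axis i 1) ` UNIV"
      unfolding Basis_vec_def by auto
    also have "(UNIV :: 3 set) = {1, 2, 3}"
      using exhaust_3 by auto
    finally show ?thesis
      by simp
  qed
  have distinct: "axis (1::3) (1::real) \<noteq> axis 2 1" "axis (1::3) (1::real) \<noteq> axis 3 1"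
    "axis (2::3) (1::real) \<noteq> axis 3 1"
    by (simp_all add: axis_eq_axis)
  define f where "f b = (if b = axis 1 1 then g1 else if b = axis 2 1 then g2 else g3)"
    for b :: "real^3"
  have "(\<integral>\<^sup>+x. (\<Prod>b\<in>Basis. f b (x \<bullet> b)) \<partial>(lborel :: (real^3) measure))
      = (\<Prod>b\<in>Basis. (\<integral>\<^sup>+t. f b t \<partial>lborel))"
    by (rule nn_integral_lborel_prod) (auto simp: f_def)
  then show ?thesis
    unfolding basis using distinct by (simp add: f_def inner_axis mult.assoc)
qed

text \<open>Singular kernels are written as \<open>inverse (ennreal r)\<close>, which is \<open>\<infinity>\<close> at \<open>r = 0\<close>;
  so the pointwise bounds below hold everywhere, not just off the singular set.\<close>

lemma nn_integral_inverse_powr_interval_finite: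
  assumes "0 \<le> a" "a < 1" "0 \<le> R"
  shows "(\<integral>\<^sup>+t. indicator {-R..R} t * inverse (ennreal (\<bar>t\<bar> powr a)) \<partial>lborel) < \<infinity>"
proof -
  define g where "g t = ennreal (indicator {0..R} t * t powr (-a))" for t :: real
  have [measurable]: "g \<in> borel_measurable borel"
    unfolding g_def by measurable
  have g_finite: "(\<integral>\<^sup>+t. g t \<partial>lborel) = ennreal (R powr (1 - a) / (1 - a))"
    unfolding g_def
    by (rule nn_integral_has_integral_lebesgue)
       (use has_integral_powr_from_0[of "-a" R] assms in auto)
  have g_reflect: "(\<integral>\<^sup>+t. g (- t) \<partial>lborel) = (\<integral>\<^sup>+t. g t \<partial>lborel)"
    by (subst lborel_distr_uminus[symmetric]) (simp add: nn_integral_distr)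
  have "(\<integral>\<^sup>+t. indicator {-R..R} t * inverse (ennreal (\<bar>t\<bar> powr a)) \<partial>lborel)
      \<le> (\<integral>\<^sup>+t. g t + g (- t) \<partial>lborel)"
  proof (rule nn_integral_mono_AE)
    show "AE t in lborel. indicator {-R..R} t * inverse (ennreal (\<bar>t\<bar> powr a)) \<le> g t + g (- t)"
      using AE_lborel_singleton[of 0]
      by eventually_elim
         (auto simp: g_def indicator_def inverse_ennreal powr_minus_divide divide_inverse
               simp flip: ennreal_plus)
  qed
  also have "\<dots> = (\<integral>\<^sup>+t. g t \<partial>lborel) + (\<integral>\<^sup>+t. g (- t) \<partial>lborel)"
    by (rule nn_integral_add) auto
  also have "\<dots> < \<infinity>"
    by (simp add: g_reflect g_finite)
  finally show ?thesis .
qed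

lemma norm_ge_geometric_mean_3:
  fixes x :: "real^3"
  shows "\<bar>x$1\<bar> powr (1/3) * \<bar>x$2\<bar> powr (1/3) * \<bar>x$3\<bar> powr (1/3) \<le> norm x"
proof -
  have coord: "\<bar>x$i\<bar> powr (1/3) \<le> norm x powr (1/3)" for i
    by (intro powr_mono2) (auto simp: component_le_norm_cart)
  have "\<bar>x$1\<bar> powr (1/3) * \<bar>x$2\<bar> powr (1/3) * \<bar>x$3\<bar> powr (1/3)
      \<le> norm x powr (1/3) * norm x powr (1/3) * norm x powr (1/3)"
    by (intro mult_mono coord) auto
  also have "\<dots> = norm x"
    by (simp add: powr_add[symmetric])
  finally show ?thesis .
qed

lemma inverse_ennreal_mult_3:
  fixes a b c :: real
  assumes "0 \<le> a" "0 \<le> b" "0 \<le> c"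
  shows "inverse (ennreal (a * b * c)) = inverse (ennreal a) * inverse (ennreal b) * inverse (ennreal c)"
  using assms by (simp add: ennreal_mult ennreal_inverse_mult ennreal_mult_less_top)

lemma nn_integral_inverse_norm_cball_finite:
  assumes "0 \<le> R"
  shows "(\<integral>\<^sup>+x. indicator (cball 0 R) x * inverse (ennreal (norm x)) \<partial>(lborel :: (real^3) measure)) < \<infinity>"
proof -
  define \<psi> where "\<psi> t = indicator {-R..R} t * inverse (ennreal (\<bar>t\<bar> powr (1/3)))" for t :: real
  have [measurable]: "\<psi> \<in> borel_measurable borel"
    unfolding \<psi>_def by measurable
  have bound: "indicator (cball 0 R) x * inverse (ennreal (norm x)) \<le> \<psi> (x$1) * \<psi> (x$2) * \<psi> (x$3)"
    for x :: "real^3"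
  proof (cases "x \<in> cball 0 R")
    case True
    then have "\<psi> (x$i) = inverse (ennreal (\<bar>x$i\<bar> powr (1/3)))" for i
      using component_le_norm_cart[of x i] by (auto simp: \<psi>_def indicator_def abs_le_iff)
    moreover have "inverse (ennreal (norm x))
        \<le> inverse (ennreal (\<bar>x$1\<bar> powr (1/3) * \<bar>x$2\<bar> powr (1/3) * \<bar>x$3\<bar> powr (1/3)))"
      by (intro ennreal_inverse_antimono ennreal_leI norm_ge_geometric_mean_3)
    ultimately show ?thesis
      using True by (simp add: inverse_ennreal_mult_3)
  qed simp
  have "(\<integral>\<^sup>+x. indicator (cball 0 R) x * inverse (ennreal (norm x)) \<partial>(lborel :: (real^3) measure))
      \<le> (\<integral>\<^sup>+x. \<psi> ((x::real^3)$1) * \<psi> (x$2) * \<psi> (x$3) \<partial>lborel)"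
    by (intro nn_integral_mono bound)
  also have "\<dots> = (\<integral>\<^sup>+t. \<psi> t \<partial>lborel) * (\<integral>\<^sup>+t. \<psi> t \<partial>lborel) * (\<integral>\<^sup>+t. \<psi> t \<partial>lborel)"
    by (rule nn_integral_lborel_prod_3) auto
  also have "\<dots> < \<infinity>"
    using nn_integral_inverse_powr_interval_finite[of "1/3" R] assms
    by (simp add: \<psi>_def ennreal_mult_less_top)
  finally show ?thesis .
qed

lemma lborel_distr_orthogonal_transformation:
  fixes T :: "real^'n::{finite,wellorder} \<Rightarrow> real^'n::{finite,wellorder}"
  assumes T: "orthogonal_transformation T"
  shows "distr lborel borel T = lborel"
proof (rule lborel_eqI[symmetric])
  have [measurable]: "T \<in> borel_measurable borel"
    using T by (intro borel_measurable_continuous_onI linear_continuous_on)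
      (simp add: orthogonal_transformation_linear linear_conv_bounded_linear[symmetric])
  show "sets (distr lborel borel T) = sets borel"
    by simp
  have T_inv: "orthogonal_transformation (inv T)"
    using T by (rule orthogonal_transformation_inv)
  fix l u :: "real^'n::{finite,wellorder}"
  assume "\<And>b. b \<in> Basis \<Longrightarrow> l \<bullet> b \<le> u \<bullet> b"
  then have box: "emeasure lborel (box l u) = (\<Prod>b\<in>Basis. (u - l) \<bullet> b)"
    by (simp add: emeasure_lborel_box_eq)
  have preimage: "T -` box l u = inv T ` box l u"
    using orthogonal_transformation_bij[OF T] by (auto simp: bij_vimage_eq_inv_image)
  have lmeas: "inv T ` box l u \<in> lmeasurable"
    by (rule measurable_orthogonal_image[OF T_inv]) simp
  have "inv T ` box l u \<in> sets borel"
    unfolding preimage[symmetric] using measurable_sets[of T borel borel "box l u"] by simp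
  then have "emeasure (distr lborel borel T) (box l u) = emeasure lebesgue (inv T ` box l u)"
    by (simp add: emeasure_distr preimage)
  also have "\<dots> = measure lebesgue (box l u)"
    using lmeas by (simp add: emeasure_eq_measure2 measure_orthogonal_image[OF T_inv])
  also have "\<dots> = emeasure lborel (box l u)"
    by (simp add: emeasure_eq_measure2)
  finally show "emeasure (distr lborel borel T) (box l u) = (\<Prod>b\<in>Basis. (u - l) \<bullet> b)"
    by (simp only: box)
qed

lemma borel_measurable_cross3[measurable]:
  fixes f g :: "'a \<Rightarrow> real^3"
  assumes "f \<in> borel_measurable M" "g \<in> borel_measurable M"
  shows "(\<lambda>x. cross3 (f x) (g x)) \<in> borel_measurable M"
  using assms by (rule borel_measurable_continuous_Pair)
    (intro continuous_on_cross continuous_on_fst continuous_on_snd continuous_on_id)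

lemma norm_cross3_axis_3: "norm (cross3 (axis 3 1) y) = sqrt ((y$1)\<^sup>2 + (y$2)\<^sup>2)"
  by (simp add: norm_eq_sqrt_inner cross3_simps axis_def power2_eq_square)

lemma sqrt_abs_mult_le_sqrt_sum_squares:
  fixes s t :: real
  shows "\<bar>s\<bar> powr (1/2) * \<bar>t\<bar> powr (1/2) \<le> sqrt (s\<^sup>2 + t\<^sup>2)"
proof -
  have "\<bar>s\<bar> * \<bar>t\<bar> \<le> s\<^sup>2 + t\<^sup>2"
  proof -
    have "2 * \<bar>s\<bar> * \<bar>t\<bar> \<le> s\<^sup>2 + t\<^sup>2"
      using sum_squares_bound[of "\<bar>s\<bar>" "\<bar>t\<bar>"] by (simp add: power2_eq_square)
    moreover have "0 \<le> \<bar>s\<bar> * \<bar>t\<bar>"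
      by simp
    ultimately show ?thesis
      by linarith
  qed
  then show ?thesis
    by (simp add: powr_half_sqrt real_sqrt_mult[symmetric])
qed

lemma nn_integral_inverse_norm_cross_axis_finite:
  assumes "0 \<le> R"
  shows "(\<integral>\<^sup>+y. indicator (cball 0 R) y * inverse (ennreal (norm (cross3 (axis 3 1) y))) \<partial>lborel) < \<infinity>"
proof -
  define \<psi> where "\<psi> t = indicator {-R..R} t * inverse (ennreal (\<bar>t\<bar> powr (1/2)))" for t :: real
  have [measurable]: "\<psi> \<in> borel_measurable borel"
    unfolding \<psi>_def by measurable
  have bound: "indicator (cball 0 R) y * inverse (ennreal (norm (cross3 (axis 3 1) y)))
      \<le> \<psi> (y$1) * \<psi> (y$2) * indicator {-R..R} (y$3)" for y :: "real^3"
  proof (cases "y \<in> cball 0 R")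
    case True
    then have coord: "y$i \<in> {-R..R}" for i
      using component_le_norm_cart[of y i] by (auto simp: abs_le_iff)
    have "inverse (ennreal (norm (cross3 (axis 3 1) y)))
        \<le> inverse (ennreal (\<bar>y$1\<bar> powr (1/2) * \<bar>y$2\<bar> powr (1/2)))"
      unfolding norm_cross3_axis_3
      by (intro ennreal_inverse_antimono ennreal_leI sqrt_abs_mult_le_sqrt_sum_squares)
    then show ?thesis
      using True coord by (simp add: \<psi>_def ennreal_mult ennreal_inverse_mult)
  qed simp
  have "(\<integral>\<^sup>+y. indicator (cball 0 R) y * inverse (ennreal (norm (cross3 (axis 3 1) y))) \<partial>lborel)
      \<le> (\<integral>\<^sup>+y. \<psi> ((y::real^3)$1) * \<psi> (y$2) * indicator {-R..R} (y$3) \<partial>lborel)"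
    by (intro nn_integral_mono bound)
  also have "\<dots> = (\<integral>\<^sup>+t. \<psi> t \<partial>lborel) * (\<integral>\<^sup>+t. \<psi> t \<partial>lborel) * (\<integral>\<^sup>+t. indicator {-R..R} t \<partial>lborel)"
    by (rule nn_integral_lborel_prod_3) auto
  also have "\<dots> < \<infinity>"
    using nn_integral_inverse_powr_interval_finite[of "1/2" R] assms
    by (simp add: \<psi>_def ennreal_mult_less_top)
  finally show ?thesis .
qed

lemma nn_integral_inverse_norm_cross_cball:
  fixes a :: "real^3"
  assumes "a \<noteq> 0"
  shows "(\<integral>\<^sup>+b. indicator (cball 0 R) b * inverse (ennreal (norm (cross3 a b))) \<partial>lborel)
    = inverse (ennreal (norm a))
      * (\<integral>\<^sup>+y. indicator (cball 0 R) y * inverse (ennreal (norm (cross3 (axis 3 1) y))) \<partial>lborel)"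
proof -
  obtain T :: "real^3 \<Rightarrow> real^3"
    where T: "orthogonal_transformation T" and T_axis: "T (axis 3 1) = (1 / norm a) *\<^sub>R a"
    using orthogonal_transformation_exists_1[of "axis 3 1" "(1 / norm a) *\<^sub>R a"] assms
    by (auto simp: norm_axis_1)
  have [measurable]: "T \<in> borel_measurable borel"
    using T by (intro borel_measurable_continuous_onI linear_continuous_on)
      (simp add: orthogonal_transformation_linear linear_conv_bounded_linear[symmetric])
  have [measurable]: "cball (0::real^3) R \<in> sets borel"
    by simp
  have "a = norm a *\<^sub>R T (axis 3 1)"
    using assms T_axis by simp
  then have "cross3 a (T y) = norm a *\<^sub>R (det (matrix T) *\<^sub>R T (cross3 (axis 3 1) y))" for y
    by (metis cross_mult_left cross_orthogonal_transformation[OF T])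
  then have norm_cross: "norm (cross3 a (T y)) = norm a * norm (cross3 (axis 3 1) y)" for y
    using orthogonal_transformation_det[OF T] orthogonal_transformation_norm[OF T]
    by (simp add: abs_mult)
  have "(\<integral>\<^sup>+b. indicator (cball 0 R) b * inverse (ennreal (norm (cross3 a b))) \<partial>lborel)
      = (\<integral>\<^sup>+y. indicator (cball 0 R) (T y) * inverse (ennreal (norm (cross3 a (T y)))) \<partial>lborel)"
    by (subst lborel_distr_orthogonal_transformation[OF T, symmetric]) (rule nn_integral_distr; simp)
  also have "\<dots> = (\<integral>\<^sup>+y. inverse (ennreal (norm a))
      * (indicator (cball 0 R) y * inverse (ennreal (norm (cross3 (axis 3 1) y)))) \<partial>lborel)"
    using assms orthogonal_transformation_norm[OF T]
    by (simp add: norm_cross ennreal_mult ennreal_inverse_mult mult_ac indicator_def)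
  also have "\<dots> = inverse (ennreal (norm a))
      * (\<integral>\<^sup>+y. indicator (cball 0 R) y * inverse (ennreal (norm (cross3 (axis 3 1) y))) \<partial>lborel)"
    by (rule nn_integral_cmult) measurable
  finally show ?thesis .
qed

lemma nn_integral_inverse_norm_cross_cball_finite:
  assumes "0 \<le> R"
  shows "(\<integral>\<^sup>+q. indicator (cball 0 R \<times> cball 0 R) q * inverse (ennreal (norm (cross3 (fst q) (snd q))))
    \<partial>(lborel \<Otimes>\<^sub>M lborel :: ((real^3) \<times> (real^3)) measure)) < \<infinity>"
proof -
  define C where "C = (\<integral>\<^sup>+y. indicator (cball 0 R) y * inverse (ennreal (norm (cross3 (axis 3 1) y))) \<partial>lborel)"
  have [measurable]: "cball (0::real^3) R \<in> sets borel"
    by simp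
  have "(\<integral>\<^sup>+q. indicator (cball 0 R \<times> cball 0 R) q * inverse (ennreal (norm (cross3 (fst q) (snd q))))
      \<partial>(lborel \<Otimes>\<^sub>M lborel :: ((real^3) \<times> (real^3)) measure))
      = (\<integral>\<^sup>+a. indicator (cball 0 R) a
          * (\<integral>\<^sup>+b. indicator (cball 0 R) b * inverse (ennreal (norm (cross3 a b))) \<partial>lborel) \<partial>lborel)"
    by (subst lborel.nn_integral_fst[symmetric])
      (auto simp: indicator_times mult.assoc intro!: nn_integral_cong nn_integral_cmult)
  also have "\<dots> \<le> (\<integral>\<^sup>+a. C * (indicator (cball 0 R) a * inverse (ennreal (norm (a::real^3)))) \<partial>lborel)"
  proof (rule nn_integral_mono_AE)
    show "AE a in lborel. indicator (cball 0 R) a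
        * (\<integral>\<^sup>+b. indicator (cball 0 R) b * inverse (ennreal (norm (cross3 a b))) \<partial>lborel)
      \<le> C * (indicator (cball 0 R) a * inverse (ennreal (norm a)))"
      using AE_lborel_singleton[of 0]
    proof eventually_elim
      case (elim a)
      then show ?case
        unfolding nn_integral_inverse_norm_cross_cball[OF elim] C_def by (simp add: mult_ac)
    qed
  qed
  also have "\<dots> = C * (\<integral>\<^sup>+a. indicator (cball 0 R) a * inverse (ennreal (norm (a::real^3))) \<partial>lborel)"
    by (rule nn_integral_cmult) measurable
  also have "\<dots> < \<infinity>"
    using assms nn_integral_inverse_norm_cross_axis_finite nn_integral_inverse_norm_cball_finite
    by (simp add: C_def ennreal_mult_less_top)
  finally show ?thesis .
qed

lemma AE_cross3_nonzero_cball: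
  assumes "0 \<le> R"
  shows "AE q in (lborel \<Otimes>\<^sub>M lborel :: ((real^3) \<times> (real^3)) measure).
    q \<in> cball 0 R \<times> cball 0 R \<longrightarrow> cross3 (fst q) (snd q) \<noteq> 0"
proof -
  have [measurable]: "cball (0::real^3) R \<in> sets borel"
    by simp
  have "AE q in (lborel \<Otimes>\<^sub>M lborel :: ((real^3) \<times> (real^3)) measure).
      indicator (cball 0 R \<times> cball 0 R) q * inverse (ennreal (norm (cross3 (fst q) (snd q)))) \<noteq> \<infinity>"
    using nn_integral_inverse_norm_cross_cball_finite[OF assms] by (intro nn_integral_PInf_AE) auto
  then show ?thesis
    by eventually_elim (auto simp: indicator_def)
qed

lemma norm_cross3_le: "norm (cross3 x y) \<le> norm x * norm y"
proof -
  have "(norm (cross3 x y))\<^sup>2 \<le> (norm x * norm y)\<^sup>2"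
    using norm_cross_dot[of x y] by (metis le_add_same_cancel1 zero_le_power2)
  then show ?thesis
    by (rule power2_le_imp_le) simp
qed

section \<open>The matrices \<open>hatA\<close> and \<open>hatL\<close>\<close>

lemma borel_measurable_cnj[measurable]:
  "f \<in> borel_measurable M \<Longrightarrow> (\<lambda>x. cnj (f x)) \<in> borel_measurable M"
  by (rule borel_measurable_continuous_on[where f = cnj]) (auto intro: continuous_intros)

lemma borel_measurable_complex_of_real[measurable]:
  "f \<in> borel_measurable M \<Longrightarrow> (\<lambda>x. complex_of_real (f x)) \<in> borel_measurable M"
  by (rule borel_measurable_continuous_on[where f = complex_of_real]) (auto intro: continuous_intros)

lemma integrable_bounded_mult_kernel:
  fixes f :: "'a \<Rightarrow> complex" and k :: "'a \<Rightarrow> real" and \<kappa> :: "'a \<Rightarrow> ennreal"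
  assumes [measurable]: "f \<in> borel_measurable M" "k \<in> borel_measurable M" "\<kappa> \<in> borel_measurable M"
    "S \<in> sets M"
    and bounded: "\<And>x. norm (f x) \<le> B"
    and support: "\<And>x. x \<notin> S \<Longrightarrow> f x = 0"
    and dominated: "\<And>x. x \<in> S \<Longrightarrow> ennreal \<bar>k x\<bar> \<le> \<kappa> x"
    and finite: "(\<integral>\<^sup>+x. indicator S x * \<kappa> x \<partial>M) < \<infinity>"
  shows "integrable M (\<lambda>x. f x * of_real (k x))"
proof (rule integrableI_bounded)
  show "(\<lambda>x. f x * of_real (k x)) \<in> borel_measurable M"
    by measurable
  have "(\<integral>\<^sup>+x. ennreal (norm (f x * of_real (k x))) \<partial>M) \<le> (\<integral>\<^sup>+x. ennreal B * (indicator S x * \<kappa> x) \<partial>M)"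
  proof (rule nn_integral_mono)
    fix x
    show "ennreal (norm (f x * of_real (k x))) \<le> ennreal B * (indicator S x * \<kappa> x)"
    proof (cases "x \<in> S")
      case True
      have "ennreal (norm (f x * of_real (k x))) = ennreal (norm (f x)) * ennreal \<bar>k x\<bar>"
        by (simp add: norm_mult ennreal_mult)
      also have "\<dots> \<le> ennreal B * \<kappa> x"
        using bounded dominated[OF True] by (intro mult_mono) (auto intro: ennreal_leI)
      finally show ?thesis
        using True by simp
    qed (simp add: support)
  qed
  also have "\<dots> = ennreal B * (\<integral>\<^sup>+x. indicator S x * \<kappa> x \<partial>M)"
    by (rule nn_integral_cmult) measurable
  also have "\<dots> < \<infinity>"
    using finite by (simp add: ennreal_mult_less_top)
  finally show "(\<integral>\<^sup>+x. ennreal (norm (f x * of_real (k x))) \<partial>M) < \<infinity>" .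
qed

text \<open>The weight \<open>W\<close> need not be measurable: off the zeros of \<open>f\<close> it equals
  \<open>(|f|\<^sup>2 W) / |f|\<^sup>2\<close>, and \<open>|f|\<^sup>2 W\<close> is integrable.\<close>

lemma integrable_mult_cnj_weight:
  fixes f g :: "'a \<Rightarrow> complex" and W :: "'a \<Rightarrow> real"
  assumes [measurable]: "f \<in> borel_measurable M" "g \<in> borel_measurable M"
    and W_nonneg: "\<And>x. 0 \<le> W x"
    and f_int: "integrable M (\<lambda>x. (norm (f x))\<^sup>2 * W x)"
    and g_int: "integrable M (\<lambda>x. (norm (g x))\<^sup>2 * W x)"
  shows "integrable M (\<lambda>x. f x * cnj (g x) * of_real (W x))"
proof (rule Bochner_Integration.integrable_bound)
  show "integrable M (\<lambda>x. (norm (f x))\<^sup>2 * W x + (norm (g x))\<^sup>2 * W x)"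
    using f_int g_int by (rule Bochner_Integration.integrable_add)
  have [measurable]: "(\<lambda>x. (norm (f x))\<^sup>2 * W x) \<in> borel_measurable M"
    using f_int by (rule borel_measurable_integrable)
  have "f x * cnj (g x) * of_real (W x)
      = f x * cnj (g x) * of_real ((norm (f x))\<^sup>2 * W x / (norm (f x))\<^sup>2)" for x
    by (cases "f x = 0") simp_all
  then show "(\<lambda>x. f x * cnj (g x) * of_real (W x)) \<in> borel_measurable M"
    by (simp only:) measurable
  show "AE x in M. norm (f x * cnj (g x) * of_real (W x)) \<le> norm ((norm (f x))\<^sup>2 * W x + (norm (g x))\<^sup>2 * W x)"
  proof (rule AE_I2)
    fix x
    have "2 * norm (f x) * norm (g x) \<le> (norm (f x))\<^sup>2 + (norm (g x))\<^sup>2"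
      using sum_squares_bound[of "norm (f x)" "norm (g x)"] by (simp add: power2_eq_square)
    then have "norm (f x) * norm (g x) \<le> (norm (f x))\<^sup>2 + (norm (g x))\<^sup>2"
      using mult_nonneg_nonneg[OF norm_ge_zero norm_ge_zero, of "f x" "g x"] by linarith
    then show "norm (f x * cnj (g x) * of_real (W x)) \<le> norm ((norm (f x))\<^sup>2 * W x + (norm (g x))\<^sup>2 * W x)"
      using W_nonneg[of x] by (simp add: norm_mult abs_of_nonneg distrib_right[symmetric] mult_right_mono)
  qed
qed

lemma (in pair_sigma_finite) integrable_mult_fst_snd:
  fixes f g :: "_ \<Rightarrow> complex"
  assumes f: "integrable M1 f" and g: "integrable M2 g"
  shows "integrable (M1 \<Otimes>\<^sub>M M2) (\<lambda>q. f (fst q) * g (snd q))"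
proof (rule Fubini_integrable)
  have [measurable]: "f \<in> borel_measurable M1" "g \<in> borel_measurable M2"
    using f g by (auto dest: borel_measurable_integrable)
  show "(\<lambda>q. f (fst q) * g (snd q)) \<in> borel_measurable (M1 \<Otimes>\<^sub>M M2)"
    by measurable
  have "integrable M1 (\<lambda>x. norm (f x) * (\<integral>y. norm (g y) \<partial>M2))"
    using f by (intro integrable_mult_left integrable_norm)
  then show "integrable M1 (\<lambda>x. \<integral>y. norm (f (fst (x, y)) * g (snd (x, y))) \<partial>M2)"
    by (simp add: norm_mult)
  show "AE x in M1. integrable M2 (\<lambda>y. f (fst (x, y)) * g (snd (x, y)))"
    using g by (auto intro: integrable_mult_right)
qed

lemma (in pair_sigma_finite) integral_mult_fst_snd:
  fixes f g :: "_ \<Rightarrow> complex"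
  assumes f: "integrable M1 f" and g: "integrable M2 g"
  shows "(\<integral>q. f (fst q) * g (snd q) \<partial>(M1 \<Otimes>\<^sub>M M2)) = integral\<^sup>L M1 f * integral\<^sup>L M2 g"
  using integral_fst'[OF integrable_mult_fst_snd[OF f g]] by simp

lemma reciprocal_mult_le_of_mult_le:
  fixes a t b k :: real
  assumes "0 \<le> a" "0 < t" "t * a \<le> b" "0 < k"
  shows "1 / (k * b) * a \<le> 1 / (k * t)"
proof (cases "a = 0")
  case False
  with assms have "0 < b"
    by (smt (verit) mult_pos_pos)
  with assms show ?thesis
    by (simp add: field_simps)
qed (use assms in simp)

lemma borel_measurable_kernelK[measurable]:
  fixes f g :: "'a \<Rightarrow> real^3"
  assumes "f \<in> borel_measurable M" "g \<in> borel_measurable M"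
  shows "(\<lambda>x. kernelK (f x) (g x)) \<in> borel_measurable M"
  using assms unfolding kernelK_def by measurable

locale radial_orthonormal_system =
  fixes w :: "real \<Rightarrow> ennreal" and R :: real and p :: nat
    and h :: "nat \<Rightarrow> real^3 \<Rightarrow> complex"
  assumes R_nonneg: "0 \<le> R"
    and h_cont: "\<And>i. i < p \<Longrightarrow> continuous_on UNIV (h i)"
    and h_supp: "\<And>i \<xi>. i < p \<Longrightarrow> R < norm \<xi> \<Longrightarrow> h i \<xi> = 0"
    and h_L2: "\<And>i. i < p \<Longrightarrow> integrable lborel (\<lambda>\<xi>. (norm (h i \<xi>))\<^sup>2 * enn2real (w (norm \<xi>)))"
    and h_orth: "\<And>i j. i < p \<Longrightarrow> j < p \<Longrightarrow> inner_w w (h i) (h j) = (if i = j then 1 else 0)"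
    and M_finite: "M_w w R < \<infinity>"
begin

definition weight :: "real^3 \<Rightarrow> real" where
  "weight \<xi> = enn2real (w (norm \<xi>))"

definition Mw :: real where
  "Mw = enn2real (M_w w R)"

lemma h_measurable[measurable]: "i < p \<Longrightarrow> h i \<in> borel_measurable borel"
  using h_cont by (auto intro: borel_measurable_continuous_onI)

lemma h_outside_cball: "i < p \<Longrightarrow> \<xi> \<notin> cball 0 R \<Longrightarrow> h i \<xi> = 0"
  using h_supp by simp

lemma h_bounded:
  obtains B where "0 \<le> B" "\<And>i \<xi>. i < p \<Longrightarrow> norm (h i \<xi>) \<le> B"
proof -
  have "compact (\<Union>i<p. h i ` cball 0 R)"
    using h_cont by (intro compact_UN compact_continuous_image) (auto intro: continuous_on_subset)
  then obtain B where B: "\<forall>z\<in>(\<Union>i<p. h i ` cball 0 R). norm z \<le> B"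
    by (meson bounded_iff compact_imp_bounded)
  have "norm (h i \<xi>) \<le> max B 0" if "i < p" for i \<xi>
    using B h_outside_cball[OF that, of \<xi>] that by (cases "\<xi> \<in> cball 0 R") force+
  then show ?thesis
    using that[of "max B 0"] by auto
qed

lemma norm_mult_weight_le: "norm \<xi> \<le> R \<Longrightarrow> norm \<xi> * weight \<xi> \<le> Mw"
proof -
  assume "norm \<xi> \<le> R"
  then have "ennreal (norm \<xi>) * w (norm \<xi>) \<le> M_w w R"
    unfolding M_w_def by (intro SUP_upper) simp
  then have "enn2real (ennreal (norm \<xi>) * w (norm \<xi>)) \<le> Mw"
    unfolding Mw_def using M_finite by (intro enn2real_mono) auto
  then show ?thesis
    by (simp add: weight_def enn2real_mult)
qed

lemma weight_integrable:
  "i < p \<Longrightarrow> j < p \<Longrightarrow> integrable lborel (\<lambda>\<xi>. h j \<xi> * cnj (h i \<xi>) * of_real (weight \<xi>))"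
  using h_L2 by (intro integrable_mult_cnj_weight) (auto simp: weight_def)

lemma weight_orthonormal:
  "i < p \<Longrightarrow> j < p \<Longrightarrow> (LINT \<xi>|lborel. h j \<xi> * cnj (h i \<xi>) * of_real (weight \<xi>)) = (if i = j then 1 else 0)"
  using h_orth by (auto simp: inner_w_def weight_def)

lemma hatA_integrable:
  assumes "i < p" "j < p"
  shows "integrable lborel (\<lambda>\<xi>. h j \<xi> * cnj (h i \<xi>) * of_real (1 / (2 * norm \<xi>)))"
proof -
  obtain B where "0 \<le> B" and B: "\<And>i \<xi>. i < p \<Longrightarrow> norm (h i \<xi>) \<le> B"
    using h_bounded by blast
  show ?thesis
  proof (rule integrable_bounded_mult_kernel)
    show "norm (h j \<xi> * cnj (h i \<xi>)) \<le> B * B" for \<xi>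
      using assms B \<open>0 \<le> B\<close> by (simp add: norm_mult mult_mono')
    show "h j \<xi> * cnj (h i \<xi>) = 0" if "\<xi> \<notin> cball 0 R" for \<xi>
      using assms that by (simp add: h_outside_cball)
    show "ennreal \<bar>1 / (2 * norm \<xi>)\<bar> \<le> inverse (ennreal (norm \<xi>))" for \<xi> :: "real^3"
      by (cases "\<xi> = 0") (auto simp: inverse_ennreal field_simps intro!: ennreal_leI)
    show "(\<integral>\<^sup>+\<xi>. indicator (cball 0 R) \<xi> * inverse (ennreal (norm (\<xi>::real^3))) \<partial>lborel) < \<infinity>"
      using R_nonneg by (rule nn_integral_inverse_norm_cball_finite)
  qed (use assms in measurable)
qed

lemma hatA_eigenvalue_ge:
  assumes "mat_eigenvalue p (hatA h) lam"
  shows "Im lam = 0 \<and> 1 / (2 * Mw) \<le> Re lam"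
proof -
  obtain v k where "k < p" "v k \<noteq> 0" and eigen: "\<And>i. i < p \<Longrightarrow> (\<Sum>j<p. hatA h i j * v j) = lam * v i"
    using assms unfolding mat_eigenvalue_def by blast
  show ?thesis
  proof (rule gram_eigenvalue_ge[where g = h and W = weight and K = "\<lambda>\<xi>. 1 / (2 * norm \<xi>)"])
    show "AE \<xi> in lborel. (\<forall>i\<in>{..<p}. h i \<xi> = 0) \<or> 1 / (2 * Mw) * weight \<xi> \<le> 1 / (2 * norm \<xi>)"
      using AE_lborel_singleton[of 0]
    proof eventually_elim
      case (elim \<xi>)
      show ?case
      proof (cases "\<xi> \<in> cball 0 R")
        case True
        then show ?thesis
          using elim
          by (intro disjI2 reciprocal_mult_le_of_mult_le norm_mult_weight_le) (auto simp: weight_def)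
      qed (simp add: h_outside_cball)
    qed
    show "\<And>i j. i \<in> {..<p} \<Longrightarrow> j \<in> {..<p} \<Longrightarrow>
      integrable lborel (\<lambda>\<xi>. h j \<xi> * cnj (h i \<xi>) * of_real (1 / (2 * norm \<xi>)))"
      using hatA_integrable by blast
    show "\<And>i. i \<in> {..<p} \<Longrightarrow>
      (\<Sum>j\<in>{..<p}. (LINT \<xi>|lborel. h j \<xi> * cnj (h i \<xi>) * of_real (1 / (2 * norm \<xi>))) * v j) = lam * v i"
      using eigen by (simp only: hatA_def lessThan_iff)
  qed (use \<open>k < p\<close> \<open>v k \<noteq> 0\<close> weight_integrable weight_orthonormal in auto)
qed

definition htensor :: "nat \<times> nat \<Rightarrow> (real^3) \<times> (real^3) \<Rightarrow> complex" where
  "htensor j q = h (fst j) (fst q) * cnj (h (snd j) (snd q))"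

lemma htensor_weight_eq:
  "htensor j q * cnj (htensor i q) * of_real (weight (fst q) * weight (snd q))
   = (h (fst j) (fst q) * cnj (h (fst i) (fst q)) * of_real (weight (fst q)))
     * (h (snd i) (snd q) * cnj (h (snd j) (snd q)) * of_real (weight (snd q)))"
  by (simp add: htensor_def mult_ac)

lemma htensor_weight_integrable:
  assumes "i \<in> {..<p} \<times> {..<p}" "j \<in> {..<p} \<times> {..<p}"
  shows "integrable (lborel \<Otimes>\<^sub>M lborel)
    (\<lambda>q. htensor j q * cnj (htensor i q) * of_real (weight (fst q) * weight (snd q)))"
  unfolding htensor_weight_eq
  using assms by (intro lborel_pair.integrable_mult_fst_snd weight_integrable) auto

lemma htensor_weight_orthonormal:
  assumes "i \<in> {..<p} \<times> {..<p}" "j \<in> {..<p} \<times> {..<p}"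
  shows "integral\<^sup>L (lborel \<Otimes>\<^sub>M lborel)
      (\<lambda>q. htensor j q * cnj (htensor i q) * of_real (weight (fst q) * weight (snd q)))
    = (if i = j then 1 else 0)"
proof -
  have "integral\<^sup>L (lborel \<Otimes>\<^sub>M lborel)
      (\<lambda>q. htensor j q * cnj (htensor i q) * of_real (weight (fst q) * weight (snd q)))
    = (LINT \<xi>|lborel. h (fst j) \<xi> * cnj (h (fst i) \<xi>) * of_real (weight \<xi>))
      * (LINT \<xi>|lborel. h (snd i) \<xi> * cnj (h (snd j) \<xi>) * of_real (weight \<xi>))"
    unfolding htensor_weight_eq
    using assms by (intro lborel_pair.integral_mult_fst_snd weight_integrable) auto
  then show ?thesis
    using assms by (auto simp: weight_orthonormal prod_eq_iff)
qed

lemma hatL_integrable: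
  assumes "i \<in> {..<p} \<times> {..<p}" "j \<in> {..<p} \<times> {..<p}"
  shows "integrable (lborel \<Otimes>\<^sub>M lborel)
    (\<lambda>q. htensor j q * cnj (htensor i q) * of_real (kernelK (fst q) (snd q)))"
proof -
  obtain B where "0 \<le> B" and B: "\<And>i \<xi>. i < p \<Longrightarrow> norm (h i \<xi>) \<le> B"
    using h_bounded by blast
  have [measurable]: "cball (0::real^3) R \<in> sets borel"
    by simp
  show ?thesis
  proof (rule integrable_bounded_mult_kernel)
    show "norm (htensor j q * cnj (htensor i q)) \<le> (B * B) * (B * B)" for q
      using assms B \<open>0 \<le> B\<close> by (auto simp: htensor_def norm_mult intro!: mult_mono')
    show "htensor j q * cnj (htensor i q) = 0" if "q \<notin> cball 0 R \<times> cball 0 R" for q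
      using assms that by (auto simp: htensor_def h_outside_cball mem_Times_iff)
    show "ennreal \<bar>kernelK (fst q) (snd q)\<bar> \<le> inverse (ennreal (norm (cross3 (fst q) (snd q))))" for q
      using pi_gt3
      by (cases "cross3 (fst q) (snd q) = 0") (auto simp: kernelK_def inverse_ennreal field_simps intro!: ennreal_leI)
    show "(\<integral>\<^sup>+q. indicator (cball 0 R \<times> cball 0 R) q * inverse (ennreal (norm (cross3 (fst q) (snd q))))
      \<partial>(lborel \<Otimes>\<^sub>M lborel :: ((real^3) \<times> (real^3)) measure)) < \<infinity>"
      using R_nonneg by (rule nn_integral_inverse_norm_cross_cball_finite)
  qed (use assms in \<open>auto simp: htensor_def\<close>)
qed

lemma hatL_eq_htensor:
  "hatL h i1 i2 j1 j2 = integral\<^sup>L (lborel \<Otimes>\<^sub>M lborel)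
     (\<lambda>q. htensor (j1, j2) q * cnj (htensor (i1, i2) q) * of_real (kernelK (fst q) (snd q)))"
  unfolding hatL_def htensor_def split_beta' by (simp add: mult_ac)

lemma hatL_eigenvalue_ge:
  assumes "op_eigenvalue p (hatL h) lam"
  shows "Im lam = 0 \<and> 1 / (2 * pi * Mw\<^sup>2) \<le> Re lam"
proof -
  obtain S i1 i2 where "i1 < p" "i2 < p" "S i1 i2 \<noteq> 0"
    and eigen: "\<And>i1 i2. i1 < p \<Longrightarrow> i2 < p \<Longrightarrow>
      (\<Sum>j1<p. \<Sum>j2<p. hatL h i1 i2 j1 j2 * S j1 j2) = lam * S i1 i2"
    using assms unfolding op_eigenvalue_def by blast
  show ?thesis
  proof (rule gram_eigenvalue_ge[where g = htensor and v = "case_prod S" and k = "(i1, i2)"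
        and W = "\<lambda>q. weight (fst q) * weight (snd q)" and K = "\<lambda>q. kernelK (fst q) (snd q)"])
    show "\<And>i j. i \<in> {..<p} \<times> {..<p} \<Longrightarrow> j \<in> {..<p} \<times> {..<p} \<Longrightarrow>
      integrable (lborel \<Otimes>\<^sub>M lborel) (\<lambda>q. htensor j q * cnj (htensor i q) * of_real (kernelK (fst q) (snd q)))"
      by (rule hatL_integrable)
    show "\<And>i. i \<in> {..<p} \<times> {..<p} \<Longrightarrow>
      (\<Sum>j\<in>{..<p} \<times> {..<p}. integral\<^sup>L (lborel \<Otimes>\<^sub>M lborel)
         (\<lambda>q. htensor j q * cnj (htensor i q) * of_real (kernelK (fst q) (snd q))) * case_prod S j)
      = lam * case_prod S i"
      using eigen by (auto simp: sum.cartesian_product' hatL_eq_htensor)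
    show "AE q in lborel \<Otimes>\<^sub>M lborel. (\<forall>i\<in>{..<p} \<times> {..<p}. htensor i q = 0)
      \<or> 1 / (2 * pi * Mw\<^sup>2) * (weight (fst q) * weight (snd q)) \<le> kernelK (fst q) (snd q)"
      using AE_cross3_nonzero_cball[OF R_nonneg]
    proof eventually_elim
      case (elim q)
      show ?case
      proof (cases "q \<in> cball 0 R \<times> cball 0 R")
        case True
        have "norm (cross3 (fst q) (snd q)) * (weight (fst q) * weight (snd q))
            \<le> (norm (fst q) * norm (snd q)) * (weight (fst q) * weight (snd q))"
          by (rule mult_right_mono[OF norm_cross3_le]) (simp add: weight_def)
        also have "\<dots> = (norm (fst q) * weight (fst q)) * (norm (snd q) * weight (snd q))"
          by (simp add: mult_ac)
        also have "\<dots> \<le> Mw\<^sup>2"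
          using True unfolding power2_eq_square
          by (intro mult_mono norm_mult_weight_le) (auto simp: mem_Times_iff weight_def Mw_def)
        finally show ?thesis
          using True elim unfolding kernelK_def
          by (intro disjI2 reciprocal_mult_le_of_mult_le) (auto simp: weight_def)
      qed (auto simp: htensor_def h_outside_cball mem_Times_iff)
    qed
  qed (use \<open>i1 < p\<close> \<open>i2 < p\<close> \<open>S i1 i2 \<noteq> 0\<close> htensor_weight_integrable htensor_weight_orthonormal in auto)
qed

end

theorem proposition3p3:
  fixes w :: "real \<Rightarrow> ennreal" and \<omega>max :: real and p :: nat
    and h :: "nat \<Rightarrow> real^3 \<Rightarrow> complex"
  assumes w_pos: "\<forall>r\<ge>0. w r > 0"
    and \<omega>_pos: "\<omega>max > 0"
    and h_cont: "\<forall>i<p. continuous_on UNIV (h i)"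
    and h_supp: "\<forall>i<p. \<forall>\<xi>. norm \<xi> > \<omega>max \<longrightarrow> h i \<xi> = 0"
    and h_L2: "\<forall>i<p. integrable lborel (\<lambda>\<xi>. (norm (h i \<xi>))\<^sup>2 * enn2real (w (norm \<xi>)))"
    and h_orth: "\<forall>i<p. \<forall>j<p. inner_w w (h i) (h j) = (if i = j then 1 else 0)"
    and M_fin: "M_w w \<omega>max < \<infinity>"
  shows "(\<forall>lam. mat_eigenvalue p (hatA h) lam \<longrightarrow>
            Im lam = 0 \<and> Re lam \<ge> 1 / (2 * enn2real (M_w w \<omega>max)))
       \<and> (\<forall>lam. op_eigenvalue p (hatL h) lam \<longrightarrow>
            Im lam = 0 \<and> Re lam \<ge> 1 / (2 * pi * (enn2real (M_w w \<omega>max))\<^sup>2))"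
proof -
  interpret radial_orthonormal_system w \<omega>max p h
    using \<omega>_pos h_cont h_supp h_L2 h_orth M_fin by unfold_locales auto
  show ?thesis
    using hatA_eigenvalue_ge hatL_eigenvalue_ge unfolding Mw_def by blast
qed

end
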